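(* Under the standing setting and assumptions (A1)–(A3) described in the context, fix $X\in\mathcal X$ and assume the set-valued map $\mathcal F:\mathcal X\rightrightarrows\mathcal M$, $\mathcal F(Y)=\{Z\in\mathcal M: Y+Z\in\mathcal A\}$, is lower semicontinuous at $X$. Then $\mathcal R_\varepsilon$ is lower semicontinuous at $X$ for every $\varepsilon>0$.
   Context: Let $\mathcal X$ be a Hausdorff, first countable, locally convex topological vector space over $\mathbb R$, partially ordered by a partial order $\geq$ with positive cone $\mathcal X_+=\{X\in\mathcal X: X\geq 0\}$. Let $\mathcal M\subset\mathcal X$ be a vector subspace with $1<\dim\mathcal M<\infty$, carrying the relative topology, and let $\pi:\mathcal M\to\mathbb R$ be linear. Standing assumptions: (A1) there is $U\in\mathcal M\cap\mathcal X_+$ with $\pi(U)=1$; (A2) $\mathcal A\subsetneq\mathcal X$ is closed, contains $0$, and satisfies $\mathcal A+\mathcal X_+\subset\mathcal A$; (A3) the map $\rho(X)=\inf\{\pi(Z): Z\in\mathcal M,\ X+Z\in\mathcal A\}$ is finitely valued and continuous on $\mathcal X$. For $\varepsilon>0$, $\mathcal R_\varepsilon(X)=\{Z\in\mathcal M: X+Z\in\mathcal A,\ \pi(Z)<\rho(X)+\varepsilon\}$. A set-valued map $\mathcal S:\mathcal X\rightrightarrows\mathcal M$ is lower semicontinuous at $X$ if for every open $\mathcal U\subset\mathcal M$ with $\mathcal S(X)\cap\mathcal U\neq\emptyset$ there is an open neighborhood $\mathcal U_X$ of $X$ with $\mathcal S(Y)\cap\mathcal U\neq\emptyset$ for all $Y\in\mathcal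 U_X$. *)

theory Defs
  imports "HOL-Analysis.Analysis"
begin

definition tvs :: "('a::{real_vector,topological_space}) itself \<Rightarrow> bool" where
  "tvs _ \<longleftrightarrow>
     continuous_on UNIV (\<lambda>p::'a \<times> 'a. fst p + snd p) \<and>
     continuous_on UNIV (\<lambda>p::real \<times> 'a. fst p *\<^sub>R snd p)"

definition locally_convex :: "('a::{real_vector,topological_space}) itself \<Rightarrow> bool" where
  "locally_convex _ \<longleftrightarrow>
     (\<forall>W::'a set. open W \<and> 0 \<in> W \<longrightarrow> (\<exists>C. open C \<and> convex C \<and> 0 \<in> C \<and> C \<subseteq> W))"

definition ordered_vs :: "('a::real_vector \<Rightarrow> 'a \<Rightarrow> bool) \<Rightarrow> bool" where
  "ordered_vs ge \<longleftrightarrow>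
     (\<forall>x. ge x x) \<and> (\<forall>x y. ge x y \<and> ge y x \<longrightarrow> x = y) \<and>
     (\<forall>x y z. ge x y \<and> ge y z \<longrightarrow> ge x z) \<and>
     (\<forall>x y z. ge x y \<longrightarrow> ge (x + z) (y + z)) \<and>
     (\<forall>x y (c::real). ge x y \<and> c \<ge> 0 \<longrightarrow> ge (c *\<^sub>R x) (c *\<^sub>R y))"

definition pos_cone :: "('a::real_vector \<Rightarrow> 'a \<Rightarrow> bool) \<Rightarrow> 'a set" where
  "pos_cone ge = {X. ge X 0}"

definition linear_on_subspace :: "'a::real_vector set \<Rightarrow> ('a \<Rightarrow> real) \<Rightarrow> bool" where
  "linear_on_subspace M p \<longleftrightarrow>
     (\<forall>x\<in>M. \<forall>y\<in>M. p (x + y) = p x + p y) \<and> (\<forall>x\<in>M. \<forall>c. p (c *\<^sub>R x) = c * p x)"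

definition feasible :: "'a::real_vector set \<Rightarrow> 'a set \<Rightarrow> 'a \<Rightarrow> 'a set" where
  "feasible M A Y = {Z \<in> M. Y + Z \<in> A}"

definition rho :: "'a::real_vector set \<Rightarrow> 'a set \<Rightarrow> ('a \<Rightarrow> real) \<Rightarrow> 'a \<Rightarrow> real" where
  "rho M A p X = Inf (p ` feasible M A X)"

definition R_eps :: "'a::real_vector set \<Rightarrow> 'a set \<Rightarrow> ('a \<Rightarrow> real) \<Rightarrow> real \<Rightarrow> 'a \<Rightarrow> 'a set" where
  "R_eps M A p e X = {Z \<in> M. X + Z \<in> A \<and> p Z < rho M A p X + e}"

definition lsc_at :: "'a::{real_vector,topological_space} set \<Rightarrow> ('a \<Rightarrow> 'a set) \<Rightarrow> 'a \<Rightarrow> bool" where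
  "lsc_at M S X \<longleftrightarrow>
     (\<forall>U. openin (top_of_set M) U \<and> S X \<inter> U \<noteq> {} \<longrightarrow>
        (\<exists>V. open V \<and> X \<in> V \<and> (\<forall>Y\<in>V. S Y \<inter> U \<noteq> {})))"

end

theory Submission
  imports Defs
begin

text \<open>For \<open>Z \<in> M\<close> the feasible sets satisfy \<open>F(X - Z) = Z + F(X)\<close>, so \<open>\<rho>\<close> is cash-additive:
  \<open>\<rho>(X - Z) = \<pi>(Z) + \<rho>(X)\<close>. Composing the continuous map \<open>\<rho>\<close> with negation shows that \<open>\<pi>\<close>
  is continuous on \<open>M\<close> in the relative topology, without using finite dimensionality.
  Hence, given \<open>Z\<^sub>0 \<in> \<R>\<^sub>\<epsilon>(X) \<inter> U\<close> with slack \<open>g = \<rho>(X) + \<epsilon> - \<pi>(Z\<^sub>0)\<close>, every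
  feasible payoff for \<open>Y\<close> found in the open set \<open>U \<inter> {\<pi> < \<pi>(Z\<^sub>0) + g/2}\<close> (which exists near \<open>X\<close>
  by lower semicontinuity of \<open>F\<close>) is \<open>\<epsilon>\<close>-optimal for \<open>Y\<close> as soon as \<open>\<rho>(Y) > \<rho>(X) - g/2\<close>.\<close>

lemma feasible_diff:
  assumes "subspace M" and "Z \<in> M"
  shows "feasible M A (X - Z) = (\<lambda>W. Z + W) ` feasible M A X"
proof (rule set_eqI, rule iffI)
  fix W assume "W \<in> feasible M A (X - Z)"
  then have "W - Z \<in> feasible M A X"
    using assms by (auto simp: feasible_def subspace_diff algebra_simps)
  then show "W \<in> (\<lambda>W. Z + W) ` feasible M A X"
    by (rule rev_image_eqI) simp
next
  fix W assume "W \<in> (\<lambda>W. Z + W) ` feasible M A X"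
  then show "W \<in> feasible M A (X - Z)"
    using assms by (auto simp: feasible_def subspace_add algebra_simps)
qed

lemma rho_diff:
  assumes M: "subspace M" and p: "linear_on_subspace M p" and Z: "Z \<in> M"
    and bdd: "p ` feasible M A X \<noteq> {}" "bdd_below (p ` feasible M A X)"
  shows "rho M A p (X - Z) = p Z + rho M A p X"
proof -
  have "\<And>W. W \<in> feasible M A X \<Longrightarrow> p (Z + W) = p Z + p W"
    using p Z by (auto simp: linear_on_subspace_def feasible_def)
  then have "p ` feasible M A (X - Z) = (\<lambda>r. p Z + r) ` p ` feasible M A X"
    by (simp add: feasible_diff[OF M Z] image_image cong: image_cong)
  then have "rho M A p (X - Z) = (INF r\<in>p ` feasible M A X. p Z + r)"
    by (simp add: rho_def)
  also have "\<dots> = p Z + rho M A p X"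
    using Inf_add_eq[of "\<lambda>r. r" "p ` feasible M A X" "p Z"] bdd by (simp add: rho_def)
  finally show ?thesis .
qed

lemma tvs_continuous_on_uminus:
  assumes "tvs TYPE('a::{real_vector,topological_space})"
  shows "continuous_on UNIV (uminus :: 'a \<Rightarrow> 'a)"
proof -
  have "continuous_on UNIV (\<lambda>q::real \<times> 'a. fst q *\<^sub>R snd q)"
    using assms by (simp add: tvs_def)
  moreover have "continuous_on UNIV (\<lambda>z::'a. (-1::real, z))"
    by (intro continuous_intros)
  ultimately show ?thesis
    using continuous_on_compose2 by fastforce
qed

lemma openin_price_sublevel:
  fixes M A :: "'a::{real_vector,topological_space} set"
  assumes tvs: "tvs TYPE('a)" and M: "subspace M" and p: "linear_on_subspace M p"
    and bdd: "\<forall>Y. p ` feasible M A Y \<noteq> {} \<and> bdd_below (p ` feasible M A Y)"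
    and cont: "continuous_on UNIV (rho M A p)"
  shows "openin (top_of_set M) {Z \<in> M. p Z < c}"
proof -
  have "{Z \<in> M. p Z < c} = M \<inter> {z. rho M A p (- z) < rho M A p 0 + c}"
    using rho_diff[OF M p _, of _ A 0] bdd by auto
  moreover have "open {z. rho M A p (- z) < rho M A p 0 + c}"
    using continuous_on_compose2[OF cont tvs_continuous_on_uminus[OF tvs]]
    by (intro open_Collect_less continuous_on_const) auto
  ultimately show ?thesis
    by (simp add: Int_commute openin_open_Int)
qed

lemma lsc_at_R_eps:
  assumes F_lsc: "lsc_at M (feasible M A) X"
    and sublevel: "\<And>c. openin (top_of_set M) {Z \<in> M. p Z < c}"
    and cont: "continuous_on UNIV (rho M A p)"
    and e: "e > 0"
  shows "lsc_at M (R_eps M A p e) X"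
  unfolding lsc_at_def
proof (intro allI impI)
  let ?r = "rho M A p"
  fix U assume U: "openin (top_of_set M) U \<and> R_eps M A p e X \<inter> U \<noteq> {}"
  then obtain Z0 where Z0: "Z0 \<in> R_eps M A p e X" "Z0 \<in> U" by blast
  define g where "g = ?r X + e - p Z0"
  have g: "g > 0" using Z0 by (simp add: R_eps_def g_def)
  define U' where "U' = U \<inter> {Z \<in> M. p Z < p Z0 + g/2}"
  have "openin (top_of_set M) U'"
    unfolding U'_def using U sublevel by blast
  moreover have "Z0 \<in> feasible M A X \<inter> U'"
    using Z0 g by (auto simp: R_eps_def feasible_def U'_def)
  ultimately obtain V1 where V1: "open V1" "X \<in> V1" "\<forall>Y\<in>V1. feasible M A Y \<inter> U' \<noteq> {}"
    using F_lsc unfolding lsc_at_def by blast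
  define V2 where "V2 = {Y. ?r X - g/2 < ?r Y}"
  have "open V2"
    unfolding V2_def using cont by (intro open_Collect_less continuous_on_const)
  show "\<exists>V. open V \<and> X \<in> V \<and> (\<forall>Y\<in>V. R_eps M A p e Y \<inter> U \<noteq> {})"
  proof (intro exI conjI ballI)
    show "open (V1 \<inter> V2)" using V1 \<open>open V2\<close> by auto
    show "X \<in> V1 \<inter> V2" using V1 g by (simp add: V2_def)
    fix Y assume Y: "Y \<in> V1 \<inter> V2"
    then obtain Z where Z: "Z \<in> feasible M A Y" "Z \<in> U'" using V1 by blast
    have "p Z < p Z0 + g/2" "?r X - g/2 < ?r Y"
      using Y Z by (auto simp: U'_def V2_def)
    then have "p Z < ?r Y + e"
      unfolding g_def by (simp add: field_simps)
    then show "R_eps M A p e Y \<inter> U \<noteq> {}"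
      using Z by (auto simp: R_eps_def feasible_def U'_def)
  qed
qed

theorem mainTheorem18:
  fixes ge :: "'a::{real_vector,t2_space,first_countable_topology} \<Rightarrow> 'a \<Rightarrow> bool"
    and M A :: "'a set" and p :: "'a \<Rightarrow> real" and X :: 'a
  assumes tvs: "tvs TYPE('a)"
    and lc: "locally_convex TYPE('a)"
    and ord: "ordered_vs ge"
    and M_sub: "subspace M"
    and M_fin: "\<exists>B. finite B \<and> span B = M"
    and M_dim: "1 < dim M"
    and p_lin: "linear_on_subspace M p"
    and A1: "\<exists>U\<in>M \<inter> pos_cone ge. p U = 1"
    and A2_closed: "closed A" and A2_zero: "0 \<in> A" and A2_proper: "A \<noteq> UNIV"
    and A2_mono: "\<forall>a\<in>A. \<forall>x\<in>pos_cone ge. a + x \<in> A"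
    and A3_finite: "\<forall>Y. p ` feasible M A Y \<noteq> {} \<and> bdd_below (p ` feasible M A Y)"
    and A3_cont: "continuous_on UNIV (rho M A p)"
    and F_lsc: "lsc_at M (feasible M A) X"
  shows "\<forall>e>0. lsc_at M (R_eps M A p e) X"
  using lsc_at_R_eps[OF F_lsc openin_price_sublevel[OF tvs M_sub p_lin A3_finite A3_cont] A3_cont]
  by blast

end
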